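(* Let $f,g:X\to Y$ be continuous maps, where $Y$ is endowed with a metric $d$. If $f$ and $g$ are equal at infinity, then $L(f)=L(g)$.
   Context: All topological spaces are Hausdorff, second countable and locally compact. $f$ and $g$ are equal at infinity if for every sequence $(x_n)$ in $X$ without limit points, $\lim_n d(f(x_n),g(x_n))=0$. The limit set $L(f)$ is the set of all $y\in Y$ for which there is a sequence $(x_n)$ in $X$ with no limit points in $X$ such that $f(x_n)\to y$. *)

theory Defs
  imports "HOL-Analysis.Analysis"
begin

definition seq_limit_point :: "(nat \<Rightarrow> 'a::topological_space) \<Rightarrow> 'a \<Rightarrow> bool" where
  "seq_limit_point x a \<longleftrightarrow> (\<forall>U. open U \<and> a \<in> U \<longrightarrow> infinite {n. x n \<in> U})"

definition no_limit_points :: "(nat \<Rightarrow> 'a::topological_space) \<Rightarrow> bool" where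
  "no_limit_points x \<longleftrightarrow> \<not> (\<exists>a. seq_limit_point x a)"

definition equal_at_infinity ::
  "('a::topological_space \<Rightarrow> 'b::metric_space) \<Rightarrow> ('a \<Rightarrow> 'b) \<Rightarrow> bool" where
  "equal_at_infinity f g \<longleftrightarrow>
     (\<forall>x::nat \<Rightarrow> 'a. no_limit_points x \<longrightarrow> (\<lambda>n. dist (f (x n)) (g (x n))) \<longlonglongrightarrow> 0)"

definition limit_set :: "('a::topological_space \<Rightarrow> 'b::topological_space) \<Rightarrow> 'b set" where
  "limit_set f = {y. \<exists>x::nat \<Rightarrow> 'a. no_limit_points x \<and> (\<lambda>n. f (x n)) \<longlonglongrightarrow> y}"

end

theory Submission
  imports Defs
begin

text \<open>If a sequence x without limit points has f (x n) converging to y, then g (x n)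
  converges to y as well, because d(f (x n), g (x n)) tends to 0.\<close>

lemma tendsto_dist_transform:
  fixes f g :: "'a \<Rightarrow> 'b::metric_space"
  assumes "(f \<longlongrightarrow> l) F" and "((\<lambda>x. dist (f x) (g x)) \<longlongrightarrow> 0) F"
  shows "(g \<longlongrightarrow> l) F"
proof (rule tendsto_dist_iff[THEN iffD2])
  have "\<forall>\<^sub>F x in F. norm (dist (g x) l) \<le> dist (f x) (g x) + dist (f x) l"
    by (simp add: dist_triangle3)
  moreover have "((\<lambda>x. dist (f x) (g x) + dist (f x) l) \<longlongrightarrow> 0) F"
    using tendsto_add_zero[OF assms(2) tendsto_dist_iff[THEN iffD1, OF assms(1)]] .
  ultimately show "((\<lambda>x. dist (g x) l) \<longlongrightarrow> 0) F"
    by (rule Lim_null_comparison)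
qed

lemma equal_at_infinity_sym: "equal_at_infinity f g \<Longrightarrow> equal_at_infinity g f"
  unfolding equal_at_infinity_def by (simp add: dist_commute)

lemma limit_set_subset_if_equal_at_infinity:
  assumes "equal_at_infinity f g"
  shows "limit_set f \<subseteq> limit_set g"
proof
  fix y assume "y \<in> limit_set f"
  then obtain x where x: "no_limit_points x" and fx: "(\<lambda>n. f (x n)) \<longlonglongrightarrow> y"
    unfolding limit_set_def by blast
  have "(\<lambda>n. dist (f (x n)) (g (x n))) \<longlonglongrightarrow> 0"
    using assms x unfolding equal_at_infinity_def by blast
  with fx have "(\<lambda>n. g (x n)) \<longlonglongrightarrow> y"
    by (rule tendsto_dist_transform)
  with x show "y \<in> limit_set g"
    unfolding limit_set_def by blast
qed

theorem lemma2p1: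
  fixes f g :: "'a::{t2_space, second_countable_topology} \<Rightarrow> 'b::{metric_space, second_countable_topology}"
  assumes "locally_compact_space (euclidean :: 'a topology)"
    and "locally_compact_space (euclidean :: 'b topology)"
    and "continuous_on UNIV f" and "continuous_on UNIV g"
    and "equal_at_infinity f g"
  shows "limit_set f = limit_set g"
  using limit_set_subset_if_equal_at_infinity[OF assms(5)]
    limit_set_subset_if_equal_at_infinity[OF equal_at_infinity_sym[OF assms(5)]]
  by (rule subset_antisym)

end
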